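(* Let $M\ge2$, $\kappa>0$ and $0<p_1<p_2<\cdots<p_M$. For $i=1,\dots,M$ define $\eta_i(c)=c\log p_i-\log(1+\kappa p_i^{-1})$ for $c\in\mathbb R$, and for $i\neq j$ let $$c_{i,j}=\frac{\log(1+\kappa p_i^{-1})-\log(1+\kappa p_j^{-1})}{\log p_i-\log p_j},$$ so that $\eta_i(c_{i,j})=\eta_j(c_{i,j})$. For $i<j$ let $\sigma_{i,j}=|\{l:\ \eta_l(c_{i,j})<\eta_i(c_{i,j})=\eta_j(c_{i,j})\}|$ and $I(s)=\{(i,j):1\le i<j\le M,\ \sigma_{i,j}=s\}$. Then for every $0\le s\le M-2$, $$I(s)=\{(i,\,M-s+i-1):\ i=1,\dots,s+1\}.$$ *)

theory Defs
  imports Complex_Main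
begin

definition eta :: "real \<Rightarrow> (nat \<Rightarrow> real) \<Rightarrow> nat \<Rightarrow> real \<Rightarrow> real" where
  "eta \<kappa> p i c = c * ln (p i) - ln (1 + \<kappa> * inverse (p i))"

definition crit :: "real \<Rightarrow> (nat \<Rightarrow> real) \<Rightarrow> nat \<Rightarrow> nat \<Rightarrow> real" where
  "crit \<kappa> p i j =
     (ln (1 + \<kappa> * inverse (p i)) - ln (1 + \<kappa> * inverse (p j))) / (ln (p i) - ln (p j))"

definition sigma :: "nat \<Rightarrow> real \<Rightarrow> (nat \<Rightarrow> real) \<Rightarrow> nat \<Rightarrow> nat \<Rightarrow> nat" where
  "sigma M \<kappa> p i j =
     card {l \<in> {1..M}. eta \<kappa> p l (crit \<kappa> p i j) < eta \<kappa> p i (crit \<kappa> p i j)}"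

definition Iset :: "nat \<Rightarrow> real \<Rightarrow> (nat \<Rightarrow> real) \<Rightarrow> nat \<Rightarrow> (nat \<times> nat) set" where
  "Iset M \<kappa> p s = {(i, j). 1 \<le> i \<and> i < j \<and> j \<le> M \<and> sigma M \<kappa> p i j = s}"

end

theory Submission
  imports Defs
begin

text \<open>With \<open>x\<^sub>l = ln p\<^sub>l\<close> and \<open>F x = ln (1 + \<kappa> exp (-x))\<close> we have \<open>\<eta>\<^sub>l c = c x\<^sub>l - F x\<^sub>l\<close>,
  and \<open>c\<^sub>i\<^sub>j\<close> is the slope of the secant of \<open>F\<close> through \<open>x\<^sub>i\<close> and \<open>x\<^sub>j\<close>. Thus
  \<open>\<eta>\<^sub>l(c\<^sub>i\<^sub>j) < \<eta>\<^sub>i(c\<^sub>i\<^sub>j)\<close> says that \<open>F\<close> lies strictly above this secant at \<open>x\<^sub>l\<close>.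
  As \<open>F' x = -\<kappa> / (exp x + \<kappa>)\<close> is strictly increasing, \<open>F\<close> is strictly convex, so this
  happens exactly when \<open>x\<^sub>l\<close> lies outside \<open>[x\<^sub>i, x\<^sub>j]\<close>, i.e. when \<open>l < i\<close> or \<open>l > j\<close>.
  Hence \<open>\<sigma>\<^sub>i\<^sub>j = (i - 1) + (M - j)\<close>, which equals \<open>s\<close> exactly when \<open>j = M - s + i - 1\<close>.\<close>

lemma secant_slopes_increasing:
  fixes f f' :: "real \<Rightarrow> real"
  assumes deriv: "\<And>x. (f has_real_derivative f' x) (at x)" and "strict_mono f'"
    and "a < b" "b < c"
  shows "(f b - f a) / (b - a) < (f c - f b) / (c - b)"
proof -
  obtain y where y: "a < y" "y < b" "f b - f a = (b - a) * f' y"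
    using MVT2[OF \<open>a < b\<close> deriv] by blast
  obtain z where z: "b < z" "z < c" "f c - f b = (c - b) * f' z"
    using MVT2[OF \<open>b < c\<close> deriv] by blast
  have "f' y < f' z"
    using \<open>strict_mono f'\<close> y z by (simp add: strict_mono_less)
  then show ?thesis
    using y z by simp
qed

lemma above_secant_iff_outside:
  fixes f :: "real \<Rightarrow> real"
  assumes slopes: "\<And>u v w. u < v \<Longrightarrow> v < w \<Longrightarrow>
      (f v - f u) / (v - u) < (f w - f v) / (w - v)"
    and "a < b"
  shows "f a + (f b - f a) / (b - a) * (x - a) < f x \<longleftrightarrow> x < a \<or> b < x"
proof -
  define C where "C = (f b - f a) / (b - a)"
  have fb: "f b = f a + C * (b - a)"
    using \<open>a < b\<close> by (simp add: C_def)
  consider "x < a" | "x = a" | "a < x" "x < b" | "x = b" | "b < x"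
    by linarith
  then show ?thesis
  proof cases
    case 1
    then have "(f a - f x) / (a - x) < C"
      using slopes[OF 1 \<open>a < b\<close>] by (simp add: C_def)
    then show ?thesis
      using 1 by (simp add: C_def [symmetric] pos_divide_less_eq algebra_simps)
  next
    case 3
    have "f x < f a + C * (x - a)"
    proof (rule ccontr)
      assume "\<not> ?thesis"
      then have "C \<le> (f x - f a) / (x - a)" and "(f b - f x) / (b - x) \<le> C"
        using 3 fb by (simp_all add: pos_le_divide_eq pos_divide_le_eq algebra_simps)
      then show False
        using slopes[OF 3] by linarith
    qed
    then show ?thesis
      using 3 by (simp add: C_def [symmetric])
  next
    case 5
    then have "C < (f x - f b) / (x - b)"
      using slopes[OF \<open>a < b\<close> 5] by (simp add: C_def)
    then show ?thesis
      using 5 fb by (simp add: C_def [symmetric] less_divide_eq algebra_simps)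
  qed (use fb \<open>a < b\<close> in \<open>simp_all add: C_def [symmetric]\<close>)
qed

lemma strict_mono_on_atLeastAtMost_if_Suc:
  fixes f :: "nat \<Rightarrow> 'a::order"
  assumes "\<And>i. m \<le> i \<Longrightarrow> i < n \<Longrightarrow> f i < f (Suc i)"
  shows "strict_mono_on {m..n} f"
proof (rule strict_mono_onI)
  fix i j
  assume "i \<in> {m..n}" "j \<in> {m..n}" "i < j"
  then show "f i < f j"
    using lift_Suc_mono_less_ivl [of "{m..<n}" f i j] assms by auto
qed

definition ln1p_exp_neg :: "real \<Rightarrow> real \<Rightarrow> real" where
  "ln1p_exp_neg \<kappa> x = ln (1 + \<kappa> * exp (- x))"

lemma ln1p_exp_neg_ln:
  assumes "x > 0"
  shows "ln1p_exp_neg \<kappa> (ln x) = ln (1 + \<kappa> * inverse x)"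
  using assms by (simp add: ln1p_exp_neg_def exp_minus)

lemma has_real_derivative_ln1p_exp_neg:
  assumes "\<kappa> > 0"
  shows "(ln1p_exp_neg \<kappa> has_real_derivative - \<kappa> / (exp x + \<kappa>)) (at x)"
proof -
  have pos: "1 + \<kappa> * exp (- x) > 0"
    using assms by (simp add: add_pos_pos)
  have "((\<lambda>x. ln (1 + \<kappa> * exp (- x))) has_real_derivative
      \<kappa> * (exp (- x) * - 1) / (1 + \<kappa> * exp (- x))) (at x)"
    by (rule derivative_eq_intros refl | use pos in simp)+
  moreover have "\<kappa> * (exp (- x) * - 1) / (1 + \<kappa> * exp (- x)) = - \<kappa> / (exp x + \<kappa>)"
    using pos by (simp add: exp_minus field_simps)
  ultimately show ?thesis
    unfolding ln1p_exp_neg_def by simp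
qed

lemma ln1p_exp_neg_secant_slopes_increasing:
  assumes "\<kappa> > 0" and "a < b" "b < c"
  shows "(ln1p_exp_neg \<kappa> b - ln1p_exp_neg \<kappa> a) / (b - a)
    < (ln1p_exp_neg \<kappa> c - ln1p_exp_neg \<kappa> b) / (c - b)"
proof (rule secant_slopes_increasing)
  show "(ln1p_exp_neg \<kappa> has_real_derivative - \<kappa> / (exp x + \<kappa>)) (at x)" for x
    using \<open>\<kappa> > 0\<close> by (rule has_real_derivative_ln1p_exp_neg)
  show "strict_mono (\<lambda>x. - \<kappa> / (exp x + \<kappa>))"
    using \<open>\<kappa> > 0\<close> by (intro strict_monoI) (simp add: frac_less2 add_pos_pos)
qed fact+

lemma eta_eq_ln1p_exp_neg:
  assumes "p l > 0"
  shows "eta \<kappa> p l c = c * ln (p l) - ln1p_exp_neg \<kappa> (ln (p l))"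
  using assms by (simp add: eta_def ln1p_exp_neg_ln)

lemma crit_eq_ln1p_exp_neg_secant_slope:
  assumes "p i > 0" "p j > 0"
  shows "crit \<kappa> p i j = (ln1p_exp_neg \<kappa> (ln (p j)) - ln1p_exp_neg \<kappa> (ln (p i)))
    / (ln (p j) - ln (p i))"
  using assms minus_divide_divide [of "ln1p_exp_neg \<kappa> (ln (p i)) - ln1p_exp_neg \<kappa> (ln (p j))"
      "ln (p i) - ln (p j)"]
  by (simp add: crit_def ln1p_exp_neg_ln)

lemma eta_less_at_crit_iff:
  assumes "\<kappa> > 0" and "0 < p i" "p i < p j" "0 < p l"
  shows "eta \<kappa> p l (crit \<kappa> p i j) < eta \<kappa> p i (crit \<kappa> p i j) \<longleftrightarrow> p l < p i \<or> p j < p l"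
proof -
  let ?F = "ln1p_exp_neg \<kappa>"
  define c where "c = crit \<kappa> p i j"
  have "p j > 0"
    using assms by linarith
  have "eta \<kappa> p l c < eta \<kappa> p i c \<longleftrightarrow> ?F (ln (p i)) + c * (ln (p l) - ln (p i)) < ?F (ln (p l))"
    using assms by (auto simp: eta_eq_ln1p_exp_neg right_diff_distrib)
  also have "\<dots> \<longleftrightarrow> ln (p l) < ln (p i) \<or> ln (p j) < ln (p l)"
    unfolding c_def crit_eq_ln1p_exp_neg_secant_slope [OF \<open>p i > 0\<close> \<open>p j > 0\<close>]
    using assms by (intro above_secant_iff_outside ln1p_exp_neg_secant_slopes_increasing) simp_all
  also have "\<dots> \<longleftrightarrow> p l < p i \<or> p j < p l"
    using assms \<open>p j > 0\<close> by simp
  finally show ?thesis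
    unfolding c_def .
qed

lemma sigma_eq:
  assumes "\<kappa> > 0" and mono: "strict_mono_on {1..M} p" and "p 1 > 0"
    and "1 \<le> i" "i < j" "j \<le> M"
  shows "sigma M \<kappa> p i j = (i - 1) + (M - j)"
proof -
  have pos: "\<forall>l \<in> {1..M}. p l > 0"
    using strict_mono_on_less_eq [OF mono] \<open>p 1 > 0\<close> by (auto intro: less_le_trans)
  have "p i > 0" "p i < p j"
    using pos strict_mono_onD [OF mono] assms(4-6) by auto
  then have "{l \<in> {1..M}. eta \<kappa> p l (crit \<kappa> p i j) < eta \<kappa> p i (crit \<kappa> p i j)}
      = {l \<in> {1..M}. p l < p i \<or> p j < p l}"
    using pos eta_less_at_crit_iff [OF \<open>\<kappa> > 0\<close>] by auto
  also have "\<dots> = {1..<i} \<union> {j<..M}"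
    using assms(4-6) by (auto simp: strict_mono_on_less [OF mono])
  finally have "sigma M \<kappa> p i j = card ({1..<i} \<union> {j<..M})"
    by (simp add: sigma_def)
  also have "\<dots> = (i - 1) + (M - j)"
    by (subst card_Un_disjoint) (use assms(4-6) in auto)
  finally show ?thesis .
qed

theorem lemma4:
  fixes M :: nat and \<kappa> :: real and p :: "nat \<Rightarrow> real" and s :: nat
  assumes "M \<ge> 2" and "\<kappa> > 0"
    and "p 1 > 0"
    and "\<And>i. 1 \<le> i \<Longrightarrow> i < M \<Longrightarrow> p i < p (i + 1)"
    and "s \<le> M - 2"
  shows "Iset M \<kappa> p s = {(i, M - s + i - 1) | i. 1 \<le> i \<and> i \<le> s + 1}"
proof -
  have mono: "strict_mono_on {1..M} p"
    using assms(4) by (intro strict_mono_on_atLeastAtMost_if_Suc) simp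
  have "Iset M \<kappa> p s = {(i, j). 1 \<le> i \<and> i < j \<and> j \<le> M \<and> (i - 1) + (M - j) = s}"
    unfolding Iset_def using sigma_eq [OF assms(2) mono assms(3)] by auto
  also have "\<dots> = {(i, M - s + i - 1) | i. 1 \<le> i \<and> i \<le> s + 1}"
    using assms(1,5) by auto
  finally show ?thesis .
qed

end
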